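(* Let $R$ be an associative unital division ring over a field $F$ of characteristic $0$, let $\alpha\in R$, $q\in F\setminus\{0\}$, $\alpha_M=\alpha q^M$, and let $N\geq4$. Let $y_M\in R$ ($M\in\mathbb{Z}$) be invertible and satisfy for all $M\in\mathbb{Z}$ $$y_{M+N}=\alpha_My_{M+1}+y_{M+2}\bigl(y_M^{-1}-y_{M+N-1}^{-1}\alpha_{M-1}\bigr)y_{M+N-2}.$$ In products $\prod_{k=a}^{b}c_k:=c_ac_{a+1}\cdots c_b$ (factors ordered by increasing $k$). (a) If $N$ is even, then $u_M:=y_{M+3}y_{M+2}^{-1}$ satisfies for all $M$ $$u_{M+N-3}u_{M+N-4}-u_{M-1}u_{M-2}=\alpha_M\prod_{k=0}^{N-4}u_{M+k-1}^{-1}-\Bigl(\prod_{k=0}^{N-4}u_{M+k}^{-1}\Bigr)\alpha_{M-1}.$$ (b) If $N\geq5$ is odd and $K=\lfloor N/2\rfloor$, then $u_M:=y_{M+4}y_{M+2}^{-1}$ satisfies for all $M$ $$\prod_{k=1-K}^{0}u_{M-2k-1}-u_{M-2}\prod_{k=2-K}^{0}u_{M-2k-1}=\alpha_M-\Bigl(\prod_{k=0}^{K-2}u_{M+2k}^{-1}\Bigr)\alpha_{M-1}\prod_{k=2-K}^{0}u_{M-2k-1}.$$ *)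

theory Defs
  imports Complex_Main
begin

definition oprod :: "(int \<Rightarrow> 'a::monoid_mult) \<Rightarrow> int \<Rightarrow> int \<Rightarrow> 'a" where
  "oprod c a b = prod_list (map c [a..b])"

end

theory Submission
  imports Defs
begin

text \<open>Only the shape of the recurrence is used: the coefficients \<open>\<alpha> q^M\<close> may be any sequence
  \<open>a M\<close>, and neither the hypotheses on \<open>F\<close> and \<open>q\<close> nor the parity of \<open>N\<close> play a role.
  Every product in the two identities is a telescoping product of ratios \<open>y j * inverse (y j')\<close>.
  Once they are evaluated, identity (a) is the recurrence multiplied on the right by
  \<open>inverse (y (M + N - 2))\<close>, and identity (b) is the recurrence multiplied on the right by
  \<open>inverse (y (M + 1))\<close>.\<close>

lemma mult_inverse_cancel_middle:
  fixes b :: "'r::division_ring"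
  assumes "b \<noteq> 0"
  shows "a * inverse b * (b * c) = a * c"
  using assms by (simp flip: mult.assoc add: mult.assoc[of a])

lemma oprod_append_last:
  assumes "a \<le> b + 1"
  shows "oprod c a (b + 1) = oprod c a b * c (b + 1)"
  using assms by (simp add: oprod_def upto_rec2)

lemma oprod_telescope:
  fixes g :: "int \<Rightarrow> 'r::division_ring"
  assumes nz: "\<And>k. g k \<noteq> 0"
    and c: "\<And>k. c k = g k * inverse (g (k + 1))"
    and "a \<le> b + 1"
  shows "oprod c a b = g a * inverse (g (b + 1))"
proof -
  have "a - 1 \<le> b" using \<open>a \<le> b + 1\<close> by simp
  then show ?thesis
  proof (induction b rule: int_ge_induct)
    case base
    then show ?case using nz by (simp add: oprod_def)
  next
    case (step b)
    then have "oprod c a (b + 1) = oprod c a b * c (b + 1)"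
      by (simp add: oprod_append_last)
    also have "\<dots> = g a * inverse (g (b + 1)) * (g (b + 1) * inverse (g (b + 1 + 1)))"
      by (simp only: step.IH c)
    also have "\<dots> = g a * inverse (g (b + 1 + 1))"
      using nz by (simp add: mult_inverse_cancel_middle)
    finally show ?case .
  qed
qed

lemma recurrence_consecutive_ratios:
  fixes y a u :: "int \<Rightarrow> 'r::division_ring"
  assumes nz: "\<And>M. y M \<noteq> 0"
    and rec: "\<And>M. y (M + N) = a M * y (M + 1)
                 + y (M + 2) * (inverse (y M) - inverse (y (M + N - 1)) * a (M - 1)) * y (M + N - 2)"
    and u: "\<And>M. u M = y (M + 3) * inverse (y (M + 2))"
    and "N \<ge> 4"
  shows "u (M + N - 3) * u (M + N - 4) - u (M - 1) * u (M - 2)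
           = a M * oprod (\<lambda>k. inverse (u (M + k - 1))) 0 (N - 4)
             - oprod (\<lambda>k. inverse (u (M + k))) 0 (N - 4) * a (M - 1)"
proof -
  have u_inverse: "inverse (u j) = y (j + 2) * inverse (y (j + 3))" for j
    using nz by (simp add: u nonzero_inverse_mult_distrib)
  have prod1: "oprod (\<lambda>k. inverse (u (M + k - 1))) 0 (N - 4) = y (M + 1) * inverse (y (M + N - 2))"
    using oprod_telescope[of "\<lambda>j. y (M + j + 1)"] nz \<open>N \<ge> 4\<close> by (simp add: u_inverse algebra_simps)
  have prod2: "oprod (\<lambda>k. inverse (u (M + k))) 0 (N - 4) = y (M + 2) * inverse (y (M + N - 1))"
    using oprod_telescope[of "\<lambda>j. y (M + j + 2)"] nz \<open>N \<ge> 4\<close> by (simp add: u_inverse algebra_simps)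
  have upper: "u (M + N - 3) * u (M + N - 4) = y (M + N) * inverse (y (M + N - 2))"
    using mult_inverse_cancel_middle[OF nz] by (simp add: u algebra_simps)
  have lower: "u (M - 1) * u (M - 2) = y (M + 2) * inverse (y M)"
    using mult_inverse_cancel_middle[OF nz] by (simp add: u algebra_simps)
  have "y (M + N) * inverse (y (M + N - 2))
      = a M * (y (M + 1) * inverse (y (M + N - 2)))
        + y (M + 2) * (inverse (y M) - inverse (y (M + N - 1)) * a (M - 1))"
    using nz[of "M + N - 2"] by (subst rec) (simp add: distrib_right mult.assoc)
  then show ?thesis
    unfolding upper lower prod1 prod2 by (simp add: algebra_simps)
qed

lemma recurrence_ratios_step_two:
  fixes y a u :: "int \<Rightarrow> 'r::division_ring"
  assumes nz: "\<And>M. y M \<noteq> 0"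
    and rec: "\<And>M. y (M + N) = a M * y (M + 1)
                 + y (M + 2) * (inverse (y M) - inverse (y (M + N - 1)) * a (M - 1)) * y (M + N - 2)"
    and u: "\<And>M. u M = y (M + 4) * inverse (y (M + 2))"
    and N: "N = 2 * K + 1" and "K \<ge> 2"
  shows "oprod (\<lambda>k. u (M - 2 * k - 1)) (1 - K) 0
           - u (M - 2) * oprod (\<lambda>k. u (M - 2 * k - 1)) (2 - K) 0
         = a M - oprod (\<lambda>k. inverse (u (M + 2 * k))) 0 (K - 2) * a (M - 1)
                 * oprod (\<lambda>k. u (M - 2 * k - 1)) (2 - K) 0"
proof -
  have u_inverse: "inverse (u j) = y (j + 2) * inverse (y (j + 4))" for j
    using nz by (simp add: u nonzero_inverse_mult_distrib)
  have ratio: "u (M - 2 * k - 1) = y (M - 2 * k + 3) * inverse (y (M - 2 * (k + 1) + 3))" for k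
    by (simp add: u algebra_simps)
  have prod1: "oprod (\<lambda>k. u (M - 2 * k - 1)) (1 - K) 0 = y (M + N) * inverse (y (M + 1))"
    using oprod_telescope[of "\<lambda>j. y (M - 2 * j + 3)", OF nz ratio] \<open>K \<ge> 2\<close> N
    by (simp add: algebra_simps)
  have prod2: "oprod (\<lambda>k. u (M - 2 * k - 1)) (2 - K) 0 = y (M + N - 2) * inverse (y (M + 1))"
    using oprod_telescope[of "\<lambda>j. y (M - 2 * j + 3)", OF nz ratio] \<open>K \<ge> 2\<close> N
    by (simp add: algebra_simps)
  have prod3: "oprod (\<lambda>k. inverse (u (M + 2 * k))) 0 (K - 2) = y (M + 2) * inverse (y (M + N - 1))"
    using oprod_telescope[of "\<lambda>j. y (M + 2 * j + 2)"] nz \<open>K \<ge> 2\<close> N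
    by (simp add: u_inverse algebra_simps)
  have "y (M + N) * inverse (y (M + 1))
      = a M + y (M + 2) * (inverse (y M) - inverse (y (M + N - 1)) * a (M - 1))
              * (y (M + N - 2) * inverse (y (M + 1)))"
    using nz[of "M + 1"] by (subst rec) (simp add: distrib_right mult.assoc)
  then show ?thesis
    unfolding prod1 prod2 prod3 by (simp add: u algebra_simps)
qed

theorem proposition6p8:
  fixes emb :: "'f::field_char_0 \<Rightarrow> 'r::division_ring"
    and \<alpha> :: 'r and q :: 'f and N :: int and y :: "int \<Rightarrow> 'r"
  assumes emb_add: "\<forall>a b. emb (a + b) = emb a + emb b"
    and emb_mult: "\<forall>a b. emb (a * b) = emb a * emb b"
    and emb_one: "emb 1 = 1"
    and emb_central: "\<forall>c x. emb c * x = x * emb c"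
    and q_nz: "q \<noteq> 0"
    and N_ge: "N \<ge> 4"
    and y_inv: "\<forall>M. y M \<noteq> 0"
    and rec: "\<forall>M. y (M + N) = emb (q powi M) * \<alpha> * y (M + 1)
                 + y (M + 2) * (inverse (y M) - inverse (y (M + N - 1)) * (emb (q powi (M - 1)) * \<alpha>))
                   * y (M + N - 2)"
  shows "(even N \<longrightarrow>
           (let u = (\<lambda>M. y (M + 3) * inverse (y (M + 2)));
                a = (\<lambda>M. emb (q powi M) * \<alpha>)
            in \<forall>M. u (M + N - 3) * u (M + N - 4) - u (M - 1) * u (M - 2)
                  = a M * oprod (\<lambda>k. inverse (u (M + k - 1))) 0 (N - 4)
                    - oprod (\<lambda>k. inverse (u (M + k))) 0 (N - 4) * a (M - 1)))
       \<and> (odd N \<and> N \<ge> 5 \<longrightarrow>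
           (let u = (\<lambda>M. y (M + 4) * inverse (y (M + 2)));
                a = (\<lambda>M. emb (q powi M) * \<alpha>);
                K = N div 2
            in \<forall>M. oprod (\<lambda>k. u (M - 2 * k - 1)) (1 - K) 0
                    - u (M - 2) * oprod (\<lambda>k. u (M - 2 * k - 1)) (2 - K) 0
                  = a M - oprod (\<lambda>k. inverse (u (M + 2 * k))) 0 (K - 2) * a (M - 1)
                          * oprod (\<lambda>k. u (M - 2 * k - 1)) (2 - K) 0))"
proof -
  let ?a = "\<lambda>M. emb (q powi M) * \<alpha>"
  have nz: "\<And>M. y M \<noteq> 0" and rec': "\<And>M. y (M + N) = ?a M * y (M + 1)
      + y (M + 2) * (inverse (y M) - inverse (y (M + N - 1)) * ?a (M - 1)) * y (M + N - 2)"
    using y_inv rec by simp_all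
  have "N = 2 * (N div 2) + 1 \<and> N div 2 \<ge> 2" if "odd N \<and> N \<ge> 5"
    using that by presburger
  then show ?thesis
    unfolding Let_def
    using recurrence_consecutive_ratios[OF nz rec' _ N_ge]
      recurrence_ratios_step_two[OF nz rec', where K = "N div 2"]
    by simp
qed

end
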